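(* Let $\psi\in(\operatorname{Lie}N)^*$ and suppose a metaplectic cover of $S_{\rho_\psi}$ exists. For any smooth representation $\pi$ of $G$ on $V$, the subspace \[\bigcap_{f\in\operatorname{Hom}_N(\pi,\rho_\psi)}\ker f\subset V\] is stable under the action of $R_{\rho_\psi}:=S_{\rho_\psi}\ltimes N$ (acting through $R_{\rho_\psi}\subset P\subset G$); hence the largest $\rho_\psi$-isotypic quotient $\pi_{N,\rho_\psi}=V/\bigcap_f\ker f$ carries a natural action of $R_{\rho_\psi}$.
   Context: $p$ odd prime, $F$ finite extension of $\mathbb{Q}_p$, $\varepsilon$ normalized nontrivial unitary additive character. $\mathbf G$ reductive over $F$, $\mathbf P=\mathbf M\mathbf N$ parabolic with Levi decomposition, $G,P,M,N$ their $F$-points. Kirillov: $\rho_\psi=\operatorname{Ind}_H^N\chi_\psi$ ($H=\exp\mathfrak h$, $\mathfrak h$ maximal Lie subalgebra with $\psi([\mathfrak h,\mathfrak h])=0$, $\chi_\psi=\varepsilon\circ\psi\circ\log$), irreducible smooth admissible unitary. $S_{\rho_\psi}\le M$ is the identity component of the stabilizer of the isomorphism class of $\rho_\psi$ under $(m\cdot\rho)(n)=\rho(m^{-1}nm)$. A metaplectic cover is a central extension $1\to\mu_n\to\widehat S\to S_{\rho_\psi}\to1$ of minimal degree such that $\rho_\psi$ extends to a smooth representation of $\widehat S\ltimes N$. *)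

theory Defs
  imports "HOL-Algebra.Algebra" "HOL-Analysis.Analysis"
begin

definition is_rep ::
  "('g, 'm) monoid_scheme \<Rightarrow> (complex \<Rightarrow> 'v::ab_group_add \<Rightarrow> 'v) \<Rightarrow> ('g \<Rightarrow> 'v \<Rightarrow> 'v) \<Rightarrow> bool" where
  "is_rep G sV \<pi> \<longleftrightarrow> group G \<and> vector_space sV \<and>
     (\<forall>g\<in>carrier G. Vector_Spaces.linear sV sV (\<pi> g)) \<and>
     \<pi> \<one>\<^bsub>G\<^esub> = id \<and>
     (\<forall>g\<in>carrier G. \<forall>h\<in>carrier G. \<pi> (g \<otimes>\<^bsub>G\<^esub> h) = \<pi> g \<circ> \<pi> h)"

definition conj_rep :: "('g, 'm) monoid_scheme \<Rightarrow> 'g \<Rightarrow> ('g \<Rightarrow> 'w \<Rightarrow> 'w) \<Rightarrow> 'g \<Rightarrow> 'w \<Rightarrow> 'w" where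
  "conj_rep G m \<rho> = (\<lambda>n. \<rho> (inv\<^bsub>G\<^esub> m \<otimes>\<^bsub>G\<^esub> n \<otimes>\<^bsub>G\<^esub> m))"

definition iso_rep ::
  "('g, 'm) monoid_scheme \<Rightarrow> (complex \<Rightarrow> 'w::ab_group_add \<Rightarrow> 'w) \<Rightarrow> ('g \<Rightarrow> 'w \<Rightarrow> 'w) \<Rightarrow> ('g \<Rightarrow> 'w \<Rightarrow> 'w) \<Rightarrow> bool" where
  "iso_rep H sW \<rho>1 \<rho>2 \<longleftrightarrow> (\<exists>T. Vector_Spaces.linear sW sW T \<and> bij T \<and>
       (\<forall>n\<in>carrier H. T \<circ> \<rho>1 n = \<rho>2 n \<circ> T))"

definition rep_stabilizer ::
  "('g, 'm) monoid_scheme \<Rightarrow> 'g set \<Rightarrow> 'g set \<Rightarrow> (complex \<Rightarrow> 'w::ab_group_add \<Rightarrow> 'w) \<Rightarrow> ('g \<Rightarrow> 'w \<Rightarrow> 'w) \<Rightarrow> 'g set" where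
  "rep_stabilizer G M N sW \<rho> = {m \<in> M. iso_rep (G\<lparr>carrier := N\<rparr>) sW (conj_rep G m \<rho>) \<rho>}"

definition hom_N ::
  "'g set \<Rightarrow> (complex \<Rightarrow> 'v::ab_group_add \<Rightarrow> 'v) \<Rightarrow> ('g \<Rightarrow> 'v \<Rightarrow> 'v) \<Rightarrow>
   (complex \<Rightarrow> 'w::ab_group_add \<Rightarrow> 'w) \<Rightarrow> ('g \<Rightarrow> 'w \<Rightarrow> 'w) \<Rightarrow> ('v \<Rightarrow> 'w) set" where
  "hom_N N sV \<pi> sW \<rho> = {f. Vector_Spaces.linear sV sW f \<and> (\<forall>n\<in>N. \<forall>v. f (\<pi> n v) = \<rho> n (f v))}"

definition common_kernel ::
  "'g set \<Rightarrow> (complex \<Rightarrow> 'v::ab_group_add \<Rightarrow> 'v) \<Rightarrow> ('g \<Rightarrow> 'v \<Rightarrow> 'v) \<Rightarrow>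
   (complex \<Rightarrow> 'w::ab_group_add \<Rightarrow> 'w) \<Rightarrow> ('g \<Rightarrow> 'w \<Rightarrow> 'w) \<Rightarrow> 'v set" where
  "common_kernel N sV \<pi> sW \<rho> = {v. \<forall>f\<in>hom_N N sV \<pi> sW \<rho>. f v = 0}"

text \<open>Metaplectic cover data: a central extension q : Sh -> S with finite cyclic kernel
  such that rho extends to a representation rhoh of the semidirect product Sh x| N, whose
  multiplication is (s1,n1)(s2,n2) = (s1 s2, q(s2)^-1 n1 q(s2) n2).\<close>
definition metaplectic_cover ::
  "('g, 'm) monoid_scheme \<Rightarrow> 'g set \<Rightarrow> 'g set \<Rightarrow> (complex \<Rightarrow> 'w::ab_group_add \<Rightarrow> 'w) \<Rightarrow>
   ('g \<Rightarrow> 'w \<Rightarrow> 'w) \<Rightarrow> ('h, 'k) monoid_scheme \<Rightarrow> ('h \<Rightarrow> 'g) \<Rightarrow> ('h \<times> 'g \<Rightarrow> 'w \<Rightarrow> 'w) \<Rightarrow> bool" where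
  "metaplectic_cover G S N sW \<rho> Sh q \<rho>h \<longleftrightarrow>
     group Sh \<and> q \<in> hom Sh (G\<lparr>carrier := S\<rparr>) \<and> q ` carrier Sh = S \<and>
     finite (kernel Sh (G\<lparr>carrier := S\<rparr>) q) \<and>
     (\<exists>z\<in>carrier Sh. kernel Sh (G\<lparr>carrier := S\<rparr>) q = {z [^]\<^bsub>Sh\<^esub> (k::nat) | k. True}) \<and>
     (\<forall>z\<in>kernel Sh (G\<lparr>carrier := S\<rparr>) q. \<forall>x\<in>carrier Sh. z \<otimes>\<^bsub>Sh\<^esub> x = x \<otimes>\<^bsub>Sh\<^esub> z) \<and>
     (\<forall>s\<in>carrier Sh. \<forall>n\<in>N. Vector_Spaces.linear sW sW (\<rho>h (s, n))) \<and>
     (\<forall>n\<in>N. \<rho>h (\<one>\<^bsub>Sh\<^esub>, n) = \<rho> n) \<and>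
     (\<forall>s1\<in>carrier Sh. \<forall>n1\<in>N. \<forall>s2\<in>carrier Sh. \<forall>n2\<in>N.
        \<rho>h (s1, n1) \<circ> \<rho>h (s2, n2) =
        \<rho>h (s1 \<otimes>\<^bsub>Sh\<^esub> s2, inv\<^bsub>G\<^esub> (q s2) \<otimes>\<^bsub>G\<^esub> n1 \<otimes>\<^bsub>G\<^esub> q s2 \<otimes>\<^bsub>G\<^esub> n2))"

end

theory Submission
  imports Defs
begin

text \<open>If \<open>s\<close> normalises \<open>N\<close> and \<open>T\<close> is an isomorphism from the twisted representation
  \<open>x \<mapsto> \<rho> (s x s\<inverse>)\<close> to \<open>\<rho>\<close>, then \<open>f \<mapsto> T \<circ> f \<circ> \<pi> s\<close> maps \<open>Hom\<^sub>N(\<pi>, \<rho>)\<close> to itself.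
  Hence \<open>T \<circ> f \<circ> \<pi> s\<close> vanishes on the common kernel \<open>K\<close>, and injectivity of \<open>T\<close> gives the
  same for \<open>f \<circ> \<pi> s\<close>: so \<open>\<pi> s\<close> preserves \<open>K\<close>, as does \<open>\<pi> n\<close> for \<open>n \<in> N\<close>.\<close>

lemma linear_zero: "Vector_Spaces.linear s1 s2 f \<Longrightarrow> f 0 = 0"
  unfolding Vector_Spaces.linear_def using module_hom.zero by blast

lemma is_rep_linear: "is_rep G sV \<pi> \<Longrightarrow> g \<in> carrier G \<Longrightarrow> Vector_Spaces.linear sV sV (\<pi> g)"
  by (simp add: is_rep_def)

lemma is_rep_mult:
  "is_rep G sV \<pi> \<Longrightarrow> g \<in> carrier G \<Longrightarrow> h \<in> carrier G \<Longrightarrow> \<pi> (g \<otimes>\<^bsub>G\<^esub> h) = \<pi> g \<circ> \<pi> h"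
  by (simp add: is_rep_def)

lemma is_rep_conj:
  assumes rep: "is_rep G sV \<pi>" and s: "s \<in> carrier G" and x: "x \<in> carrier G"
  shows "\<pi> s \<circ> \<pi> x = \<pi> (s \<otimes>\<^bsub>G\<^esub> x \<otimes>\<^bsub>G\<^esub> inv\<^bsub>G\<^esub> s) \<circ> \<pi> s"
proof -
  interpret G: group G using rep by (simp add: is_rep_def)
  have "s \<otimes>\<^bsub>G\<^esub> x = (s \<otimes>\<^bsub>G\<^esub> x \<otimes>\<^bsub>G\<^esub> inv\<^bsub>G\<^esub> s) \<otimes>\<^bsub>G\<^esub> s"
    using s x by (simp add: G.m_assoc)
  then show ?thesis
    using s x by (metis rep is_rep_mult G.m_closed G.inv_closed)
qed

lemma common_kernel_closed_N:
  assumes "is_rep (G\<lparr>carrier := N\<rparr>) sW \<rho>" and n: "n \<in> N"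
    and v: "v \<in> common_kernel N sV \<pi> sW \<rho>"
  shows "\<pi> n v \<in> common_kernel N sV \<pi> sW \<rho>"
  unfolding common_kernel_def
proof (intro CollectI ballI)
  fix f assume f: "f \<in> hom_N N sV \<pi> sW \<rho>"
  then have "f (\<pi> n v) = \<rho> n (f v)" using n by (simp add: hom_N_def)
  also have "f v = 0" using v f by (simp add: common_kernel_def)
  finally show "f (\<pi> n v) = 0"
    using linear_zero[OF is_rep_linear[OF assms(1)]] n by simp
qed

lemma hom_N_twist:
  assumes rep: "is_rep G sV \<pi>" and N: "N \<subseteq> carrier G" and s: "s \<in> carrier G"
    and normal: "\<forall>x\<in>N. s \<otimes>\<^bsub>G\<^esub> x \<otimes>\<^bsub>G\<^esub> inv\<^bsub>G\<^esub> s \<in> N"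
    and T: "Vector_Spaces.linear sW sW T"
    and intertwines: "\<forall>x\<in>N. T \<circ> \<rho> (s \<otimes>\<^bsub>G\<^esub> x \<otimes>\<^bsub>G\<^esub> inv\<^bsub>G\<^esub> s) = \<rho> x \<circ> T"
    and f: "f \<in> hom_N N sV \<pi> sW \<rho>"
  shows "T \<circ> f \<circ> \<pi> s \<in> hom_N N sV \<pi> sW \<rho>"
  unfolding hom_N_def
proof (intro CollectI conjI ballI allI)
  have "Vector_Spaces.linear sV sW f" using f by (simp add: hom_N_def)
  then show "Vector_Spaces.linear sV sW (T \<circ> f \<circ> \<pi> s)"
    using rep s T by (metis Vector_Spaces.linear_compose is_rep_linear comp_assoc)
next
  fix x u assume x: "x \<in> N"
  let ?x' = "s \<otimes>\<^bsub>G\<^esub> x \<otimes>\<^bsub>G\<^esub> inv\<^bsub>G\<^esub> s"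
  have "f (\<pi> s (\<pi> x u)) = f (\<pi> ?x' (\<pi> s u))"
    using is_rep_conj[OF rep s, of x] x N by (metis comp_apply subsetD)
  also have "\<dots> = \<rho> ?x' (f (\<pi> s u))"
    using f normal x by (simp add: hom_N_def)
  finally show "(T \<circ> f \<circ> \<pi> s) (\<pi> x u) = \<rho> x ((T \<circ> f \<circ> \<pi> s) u)"
    using intertwines x by (metis comp_apply)
qed

lemma common_kernel_closed_stabilizer:
  assumes rep: "is_rep G sV \<pi>" and N: "N \<subseteq> carrier G" and s: "s \<in> carrier G"
    and normal: "\<forall>x\<in>N. s \<otimes>\<^bsub>G\<^esub> x \<otimes>\<^bsub>G\<^esub> inv\<^bsub>G\<^esub> s \<in> N"
    and iso: "iso_rep (G\<lparr>carrier := N\<rparr>) sW (conj_rep G (inv\<^bsub>G\<^esub> s) \<rho>) \<rho>"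
    and v: "v \<in> common_kernel N sV \<pi> sW \<rho>"
  shows "\<pi> s v \<in> common_kernel N sV \<pi> sW \<rho>"
  unfolding common_kernel_def
proof (intro CollectI ballI)
  fix f assume f: "f \<in> hom_N N sV \<pi> sW \<rho>"
  obtain T where T: "Vector_Spaces.linear sW sW T" and "inj T"
    and "\<forall>x\<in>N. T \<circ> conj_rep G (inv\<^bsub>G\<^esub> s) \<rho> x = \<rho> x \<circ> T"
    using iso by (auto simp: iso_rep_def bij_is_inj)
  moreover have "inv\<^bsub>G\<^esub> (inv\<^bsub>G\<^esub> s) = s"
    using rep s by (simp add: is_rep_def group.inv_inv)
  ultimately have "T \<circ> f \<circ> \<pi> s \<in> hom_N N sV \<pi> sW \<rho>"
    using hom_N_twist[OF rep N s normal T _ f] by (simp add: conj_rep_def)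
  then have "(T \<circ> f \<circ> \<pi> s) v = 0"
    using v unfolding common_kernel_def by blast
  then have "T (f (\<pi> s v)) = T 0"
    using linear_zero[OF T] by simp
  with \<open>inj T\<close> show "f (\<pi> s v) = 0" by (rule injD)
qed

theorem lemma4p8:
  fixes G :: "('g, 'm) monoid_scheme"
    and N M S :: "'g set"
    and sV :: "complex \<Rightarrow> 'v::ab_group_add \<Rightarrow> 'v" and \<pi> :: "'g \<Rightarrow> 'v \<Rightarrow> 'v"
    and sW :: "complex \<Rightarrow> 'w::ab_group_add \<Rightarrow> 'w" and \<rho> :: "'g \<Rightarrow> 'w \<Rightarrow> 'w"
    and Sh :: "('h, 'k) monoid_scheme" and q :: "'h \<Rightarrow> 'g" and \<rho>h :: "'h \<times> 'g \<Rightarrow> 'w \<Rightarrow> 'w"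
  assumes "group G"
    and "subgroup N G" and "subgroup M G"
    and "\<forall>m\<in>M. \<forall>n\<in>N. m \<otimes>\<^bsub>G\<^esub> n \<otimes>\<^bsub>G\<^esub> inv\<^bsub>G\<^esub> m \<in> N"
    and "is_rep G sV \<pi>"
    and "is_rep (G\<lparr>carrier := N\<rparr>) sW \<rho>"
    and "subgroup S G" and "S \<subseteq> rep_stabilizer G M N sW \<rho>"
    and "metaplectic_cover G S N sW \<rho> Sh q \<rho>h"
  shows "\<forall>s\<in>S. \<forall>n\<in>N. \<forall>v\<in>common_kernel N sV \<pi> sW \<rho>.
           \<pi> (s \<otimes>\<^bsub>G\<^esub> n) v \<in> common_kernel N sV \<pi> sW \<rho>"
proof (intro ballI)
  fix s n v
  assume s: "s \<in> S" and n: "n \<in> N" and v: "v \<in> common_kernel N sV \<pi> sW \<rho>"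
  have N: "N \<subseteq> carrier G" and sG: "s \<in> carrier G"
    using assms(2,7) s by (auto dest: subgroup.subset)
  have normal: "\<forall>x\<in>N. s \<otimes>\<^bsub>G\<^esub> x \<otimes>\<^bsub>G\<^esub> inv\<^bsub>G\<^esub> s \<in> N"
    using assms(4,8) s by (auto simp: rep_stabilizer_def)
  have "iso_rep (G\<lparr>carrier := N\<rparr>) sW (conj_rep G (inv\<^bsub>G\<^esub> s) \<rho>) \<rho>"
    using assms(7,8) s subgroup.m_inv_closed by (fastforce simp: rep_stabilizer_def)
  moreover have "\<pi> n v \<in> common_kernel N sV \<pi> sW \<rho>"
    using common_kernel_closed_N[OF assms(6) n v] .
  ultimately have "\<pi> s (\<pi> n v) \<in> common_kernel N sV \<pi> sW \<rho>"
    using common_kernel_closed_stabilizer[OF assms(5) N sG normal] by blast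
  then show "\<pi> (s \<otimes>\<^bsub>G\<^esub> n) v \<in> common_kernel N sV \<pi> sW \<rho>"
    using is_rep_mult[OF assms(5) sG] n N by auto
qed

end
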